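(* Let $d\ge 1$, $T>0$, and let ${\bf X}_1,{\bf X}_2$ be statistically independent $d$-dimensional real random vectors with characteristic functions $f_i({\bf t})=\mathbb E[e^{j{\bf t}^T{\bf X}_i}]$, $i=1,2$. Suppose ${\bf X}_1+{\bf X}_2$ and ${\bf X}_1-{\bf X}_2$ are $(\epsilon,T)$-dependent, and suppose there is a constant $p>0$ such that $|f_i({\bf t})|\ge p$ for all ${\bf t}\in\mathbb R^d$ with $\|{\bf t}\|\le T$ and $i=1,2$. Then, if $0<\epsilon\le p^4/[360d^2(d+1)]$, there exist mean vectors $\widehat{\bf m}_1,\widehat{\bf m}_2\in\mathbb R^d$ and a common symmetric positive semi-definite matrix $\widehat{\bf Q}$ such that, with the Gaussian characteristic functions $$\Phi_i({\bf t})=e^{{\bf t}^T\left(j\widehat{\bf m}_i-\frac12\widehat{\bf Q}\,{\bf t}\right)},\quad i=1,2,$$ we have for all $\|{\bf t}\|\le T/2$ and $i=1,2$ $$|f_i({\bf t})-\Phi_i({\bf t})|\le C(\epsilon)\,|\Phi_i({\bf t})|,\qquad C(\epsilon)=\frac{720d^2(d+1)}{p^4}\,\epsilon.$$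
   Context: $j=\sqrt{-1}$. For ${\bf x}\in\mathbb R^d$, $\|{\bf x}\|=\|{\bf x}\|_1=\sum_i|x_i|$. For random vectors ${\bf U}_1,{\bf U}_2$ (of possibly different dimensions) with joint characteristic function $f_{{\bf U}_1,{\bf U}_2}({\bf t}_1,{\bf t}_2)=\mathbb E[e^{j{\bf t}_1^T{\bf U}_1+j{\bf t}_2^T{\bf U}_2}]$ and marginal characteristic functions $f_{{\bf U}_1},f_{{\bf U}_2}$, and constants $\epsilon,T\ge0$: ${\bf U}_1,{\bf U}_2$ are called $(\epsilon,T)$-dependent if $\sup_{\|{\bf t}_1\|\le T,\|{\bf t}_2\|\le T}|f_{{\bf U}_1,{\bf U}_2}({\bf t}_1,{\bf t}_2)-f_{{\bf U}_1}({\bf t}_1)f_{{\bf U}_2}({\bf t}_2)|\le\epsilon$. *)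

theory Defs
  imports "HOL-Probability.Probability"
begin

definition norm1 :: "real ^ 'd \<Rightarrow> real" where
  "norm1 x = (\<Sum>i\<in>UNIV. \<bar>x $ i\<bar>)"

definition charf :: "'a measure \<Rightarrow> ('a \<Rightarrow> real ^ 'd) \<Rightarrow> real ^ 'd \<Rightarrow> complex" where
  "charf M X t = (LINT w|M. cis (t \<bullet> X w))"

definition joint_charf :: "'a measure \<Rightarrow> ('a \<Rightarrow> real ^ 'd) \<Rightarrow> ('a \<Rightarrow> real ^ 'e)
    \<Rightarrow> real ^ 'd \<Rightarrow> real ^ 'e \<Rightarrow> complex" where
  "joint_charf M U1 U2 t1 t2 = (LINT w|M. cis (t1 \<bullet> U1 w + t2 \<bullet> U2 w))"

definition eps_T_dependent :: "'a measure \<Rightarrow> ('a \<Rightarrow> real ^ 'd) \<Rightarrow> ('a \<Rightarrow> real ^ 'e)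
    \<Rightarrow> real \<Rightarrow> real \<Rightarrow> bool" where
  "eps_T_dependent M U1 U2 \<epsilon> T \<longleftrightarrow>
     (\<forall>t1 t2. norm1 t1 \<le> T \<longrightarrow> norm1 t2 \<le> T \<longrightarrow>
        cmod (joint_charf M U1 U2 t1 t2 - charf M U1 t1 * charf M U2 t2) \<le> \<epsilon>)"

definition gauss_charf :: "real ^ 'd \<Rightarrow> real ^ 'd ^ 'd \<Rightarrow> real ^ 'd \<Rightarrow> complex" where
  "gauss_charf m Q t = exp (\<i> * complex_of_real (t \<bullet> m) - complex_of_real ((t \<bullet> (Q *v t)) / 2))"

end

theory Submission
  imports Defs
begin

(* By independence, the joint characteristic function of X1 + X2 and X1 - X2 at (s, t) is
   f1 (s + t) f2 (s - t), so (epsilon, T)-dependence says that it is within epsilon of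
   f1 s f2 s f1 t f2 (-t), a number of modulus at least p^4. Since the f_i do not vanish on the
   l1 ball of radius T, they have continuous logarithms psi_i there, and taking logarithms turns
   the near factorisation into a functional equation for psi_1, psi_2 that holds up to
   3/2 epsilon / p^4 on the ball of radius T/2. Its real part says that Re psi_1 + Re psi_2 is an
   approximately quadratic function, its imaginary part that Im psi_1 + Im psi_2 and
   Im psi_1 - Im psi_2 are approximately additive. Hyers-Ulam type stability on the l1 ball gives
   a quadratic form and linear forms within O(d epsilon / p^4) of them, and Re psi_1 <= 0 allows
   the quadratic form to be shifted to a positive semidefinite one at the cost of a factor d + 1.
   Exponentiating yields the Gaussian approximation. *)

section \<open>The l1 norm\<close>

lemma norm1_nonneg: "norm1 x \<ge> 0"
  unfolding norm1_def by (simp add: sum_nonneg)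

lemma norm1_0 [simp]: "norm1 0 = 0"
  unfolding norm1_def by simp

lemma norm1_uminus [simp]: "norm1 (- x) = norm1 x"
  unfolding norm1_def by simp

lemma norm1_triangle: "norm1 (x + y) \<le> norm1 x + norm1 y"
  unfolding norm1_def by (simp add: sum.distrib[symmetric] sum_mono abs_triangle_ineq)

lemma norm1_triangle_diff: "norm1 (x - y) \<le> norm1 x + norm1 y"
  using norm1_triangle[of x "- y"] by simp

lemma norm1_scaleR: "norm1 (c *\<^sub>R x) = \<bar>c\<bar> * norm1 x"
  unfolding norm1_def by (simp add: abs_mult sum_distrib_left)

lemma norm1_axis [simp]: "norm1 (axis k c) = \<bar>c\<bar>"
  unfolding norm1_def axis_def by (simp add: if_distrib cong: if_cong)

lemma component_le_norm1: "\<bar>x $ k\<bar> \<le> norm1 x"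
  unfolding norm1_def by (rule member_le_sum) auto

lemma norm_le_norm1: "norm x \<le> norm1 x"
  unfolding norm1_def by (rule norm_le_l1_cart)

lemma norm1_power2_le: "(norm1 (x :: real ^ 'd))\<^sup>2 \<le> real CARD('d) * (norm x)\<^sup>2"
  using sum_squared_le_sum_of_squares[of "\<lambda>k. \<bar>x $ k\<bar>" UNIV]
  unfolding norm1_def by (simp add: norm_vec_def L2_set_def sum_nonneg mult.commute)

lemma norm1_midpoint_le:
  "norm1 u \<le> r \<Longrightarrow> norm1 v \<le> r \<Longrightarrow> norm1 ((1/2) *\<^sub>R (u + v)) \<le> r"
  using norm1_triangle[of u v] by (simp add: norm1_scaleR)

lemma norm1_half_diff_le:
  "norm1 u \<le> r \<Longrightarrow> norm1 v \<le> r \<Longrightarrow> norm1 ((1/2) *\<^sub>R (u - v)) \<le> r"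
  using norm1_triangle_diff[of u v] by (simp add: norm1_scaleR)

lemma norm1_half_ball_combinations:
  assumes "norm1 x \<le> T/2" "norm1 y \<le> T/2"
  shows "norm1 (2 *\<^sub>R x) \<le> T" "norm1 (2 *\<^sub>R y) \<le> T" "norm1 (x + y) \<le> T"
    "norm1 (x - y) \<le> T" "norm1 (y - x) \<le> T"
  using assms norm1_triangle[of x y] norm1_triangle_diff[of x y] norm1_triangle_diff[of y x]
  by (auto simp: norm1_scaleR)

lemma component_sum_axis:
  "(\<Sum>k\<in>F. axis k (x $ k)) $ i = (if i \<in> F then (x :: real ^ 'd) $ i else 0)"
proof -
  have "(\<Sum>k\<in>F. axis k (x $ k)) $ i = (\<Sum>k\<in>F. if k = i then x $ i else 0)"
    unfolding sum_component by (intro sum.cong) (auto simp: axis_def)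
  then show ?thesis by simp
qed

lemma norm1_sum_axis_le: "norm1 (\<Sum>k\<in>F. axis k ((x :: real ^ 'd) $ k)) \<le> norm1 x"
  unfolding norm1_def component_sum_axis by (intro sum_mono) auto

lemma sum_axis_UNIV: "(\<Sum>k\<in>UNIV. axis k ((x :: real ^ 'd) $ k)) = x"
  unfolding vec_eq_iff component_sum_axis by simp

lemma convex_norm1_ball: "convex {x :: real ^ 'd. norm1 x \<le> T}"
proof (rule convexI)
  fix x y :: "real ^ 'd" and u v :: real
  assume x: "x \<in> {x. norm1 x \<le> T}" and y: "y \<in> {x. norm1 x \<le> T}"
    and u: "0 \<le> u" and v: "0 \<le> v" and uv: "u + v = 1"
  have "norm1 (u *\<^sub>R x + v *\<^sub>R y) \<le> u * norm1 x + v * norm1 y"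
    using norm1_triangle[of "u *\<^sub>R x" "v *\<^sub>R y"] u v by (simp add: norm1_scaleR)
  also have "\<dots> \<le> u * T + v * T"
    using x y u v by (intro add_mono mult_left_mono) auto
  finally show "u *\<^sub>R x + v *\<^sub>R y \<in> {x. norm1 x \<le> T}"
    using uv by (simp add: ring_distribs[symmetric])
qed

lemma compact_norm1_ball: "compact {x :: real ^ 'd. norm1 x \<le> T}"
  unfolding compact_eq_bounded_closed
proof
  show "bounded {x :: real ^ 'd. norm1 x \<le> T}"
    unfolding bounded_iff using norm_le_norm1 order_trans by blast
  have "continuous_on UNIV (norm1 :: real ^ 'd \<Rightarrow> real)"
    unfolding norm1_def[abs_def] by (intro continuous_intros)
  then show "closed {x :: real ^ 'd. norm1 x \<le> T}"
    by (intro closed_Collect_le continuous_on_const)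
qed

lemma continuous_on_norm1_ball_bounded:
  fixes g :: "real ^ 'd \<Rightarrow> complex"
  assumes "continuous_on {x. norm1 x \<le> T} g"
  obtains B where "\<And>x. norm1 x \<le> T \<Longrightarrow> cmod (g x) \<le> B"
  using compact_imp_bounded[OF compact_continuous_image[OF assms compact_norm1_ball]]
  unfolding bounded_iff by auto

section \<open>Characteristic functions\<close>

lemma measurable_cis_inner [measurable]:
  fixes X :: "'a \<Rightarrow> real ^ 'd"
  assumes "X \<in> borel_measurable M"
  shows "(\<lambda>w. cis (t \<bullet> X w)) \<in> borel_measurable M"
  using assms by (intro borel_measurable_continuous_on[OF continuous_on_cis]) measurable

lemma (in prob_space) integrable_cis_inner:
  fixes X :: "'a \<Rightarrow> real ^ 'd"
  assumes "X \<in> borel_measurable M"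
  shows "integrable M (\<lambda>w. cis (t \<bullet> X w))"
  by (rule integrable_const_bound[of _ 1]) (use assms in auto)

lemma (in prob_space) charf_0: "charf M X 0 = 1"
  unfolding charf_def by (simp add: prob_space)

lemma (in prob_space) norm_charf_le_1: "cmod (charf M X t) \<le> 1"
proof -
  have "cmod (charf M X t) \<le> (\<integral>w. norm (cis (t \<bullet> X w)) \<partial>M)"
    unfolding charf_def by (rule integral_norm_bound)
  then show ?thesis by (simp add: prob_space)
qed

lemma charf_uminus: "charf M X (- t) = cnj (charf M X t)"
proof -
  have "charf M X (- t) = (LINT w|M. cnj (cis (t \<bullet> X w)))"
    unfolding charf_def by (simp add: cis_cnj)
  also have "\<dots> = cnj (charf M X t)"
    unfolding charf_def by (rule Bochner_Integration.integral_cnj)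
  finally show ?thesis .
qed

lemma (in prob_space) continuous_charf:
  fixes X :: "'a \<Rightarrow> real ^ 'd"
  assumes "X \<in> borel_measurable M"
  shows "continuous_on UNIV (charf M X)"
proof -
  have "isCont (charf M X) t" for t
    unfolding continuous_at_sequentially
  proof safe
    fix S assume S: "S \<longlonglongrightarrow> t"
    show "(charf M X \<circ> S) \<longlonglongrightarrow> charf M X t"
      unfolding comp_def charf_def
      by (rule integral_dominated_convergence[where w="\<lambda>_. 1"])
         (use assms in \<open>auto intro!: tendsto_intros S continuous_on_tendsto_compose[OF continuous_on_cis]\<close>)
  qed
  then show ?thesis by (simp add: continuous_at_imp_continuous_on)
qed

lemma (in prob_space) charf_indep_pair:
  fixes X1 X2 :: "'a \<Rightarrow> real ^ 'd"
  assumes indep: "indep_var borel X1 borel X2"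
  shows "(LINT w|M. cis (a \<bullet> X1 w + b \<bullet> X2 w)) = charf M X1 a * charf M X2 b"
proof -
  have [measurable]: "X1 \<in> borel_measurable M" "X2 \<in> borel_measurable M"
    using indep_var_rv1[OF indep] indep_var_rv2[OF indep] by (simp_all add: measurable_def)
  have "(LINT w|M. cis (a \<bullet> X1 w + b \<bullet> X2 w)) = (LINT w|M. cis (a \<bullet> X1 w) * cis (b \<bullet> X2 w))"
    by (simp add: cis_mult)
  also have "\<dots> = charf M X1 a * charf M X2 b"
    unfolding charf_def
    by (intro indep_var_lebesgue_integral indep_var_compose[unfolded comp_def, OF indep]
          integrable_cis_inner) auto
  finally show ?thesis .
qed

lemma (in prob_space) eps_T_dependent_sum_diff:
  fixes X1 X2 :: "'a \<Rightarrow> real ^ 'd"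
  assumes "indep_var borel X1 borel X2"
    and "eps_T_dependent M (\<lambda>w. X1 w + X2 w) (\<lambda>w. X1 w - X2 w) \<epsilon> T"
    and "norm1 s \<le> T" "norm1 t \<le> T"
  shows "cmod (charf M X1 (s + t) * charf M X2 (s - t)
           - charf M X1 s * charf M X2 s * (charf M X1 t * charf M X2 (- t))) \<le> \<epsilon>"
proof -
  note indep_pair = charf_indep_pair[OF assms(1)]
  have "joint_charf M (\<lambda>w. X1 w + X2 w) (\<lambda>w. X1 w - X2 w) s t
          = charf M X1 (s + t) * charf M X2 (s - t)"
    unfolding joint_charf_def indep_pair[symmetric]
    by (simp add: inner_add_right inner_diff_right inner_add_left inner_diff_left algebra_simps)
  moreover have "charf M (\<lambda>w. X1 w + X2 w) s = charf M X1 s * charf M X2 s"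
    unfolding charf_def[of _ "\<lambda>w. X1 w + X2 w"] indep_pair[symmetric] by (simp add: inner_add_right)
  moreover have "charf M (\<lambda>w. X1 w - X2 w) t = charf M X1 t * charf M X2 (- t)"
    unfolding charf_def[of _ "\<lambda>w. X1 w - X2 w"] indep_pair[symmetric] by (simp add: inner_diff_right)
  moreover have "cmod (joint_charf M (\<lambda>w. X1 w + X2 w) (\<lambda>w. X1 w - X2 w) s t
      - charf M (\<lambda>w. X1 w + X2 w) s * charf M (\<lambda>w. X1 w - X2 w) t) \<le> \<epsilon>"
    using assms(2-) unfolding eps_T_dependent_def by blast
  ultimately show ?thesis by simp
qed

section \<open>Stability of approximately additive and quadratic functions\<close>

lemma approx_additive_on_interval_bound:
  fixes h :: "real \<Rightarrow> real"
  assumes "r > 0"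
    and bounded: "\<And>x. 0 \<le> x \<Longrightarrow> x \<le> r \<Longrightarrow> \<bar>h x\<bar> \<le> B"
    and "h r = 0"
    and approx_add: "\<And>a b. 0 \<le> a \<Longrightarrow> 0 \<le> b \<Longrightarrow> a + b \<le> r \<Longrightarrow>
                        \<bar>h (a + b) - h a - h b\<bar> \<le> \<kappa>"
    and "0 \<le> x" "x \<le> r"
  shows "\<bar>h x\<bar> \<le> 3 * \<kappa>"
proof -
  define M where "M = (SUP y\<in>{0..r}. \<bar>h y\<bar>)"
  have le_M: "\<bar>h y\<bar> \<le> M" if "0 \<le> y" "y \<le> r" for y
    unfolding M_def using that bounded by (intro cSUP_upper2 bdd_aboveI2) auto
  have \<kappa>_nonneg: "\<kappa> \<ge> 0"
    using approx_add[of 0 0] \<open>r > 0\<close> by auto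
  \<comment> \<open>doubling controls the lower half of the interval, reflection at \<open>r\<close> the upper half\<close>
  have lower: "\<bar>h y\<bar> \<le> (M + \<kappa>) / 2" if "0 \<le> y" "y \<le> r / 2" for y
    using approx_add[of y y] le_M[of "y + y"] that by (simp add: abs_le_iff; linarith)
  have "\<bar>h y\<bar> \<le> (M + 3 * \<kappa>) / 2" if "0 \<le> y" "y \<le> r" for y
  proof (cases "y \<le> r / 2")
    case True
    have "(M + \<kappa>) / 2 \<le> (M + 3 * \<kappa>) / 2" using \<kappa>_nonneg by simp
    then show ?thesis using lower[OF that(1) True] by linarith
  next
    case False
    have "\<bar>h y + h (r - y)\<bar> \<le> \<kappa>"
      using approx_add[of y "r - y"] that \<open>h r = 0\<close> by auto
    then show ?thesis
      using lower[of "r - y"] that False by (simp add: abs_le_iff; linarith)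
  qed
  then have "M \<le> (M + 3 * \<kappa>) / 2"
    unfolding M_def using \<open>r > 0\<close> by (intro cSUP_least) auto
  then have "M \<le> 3 * \<kappa>" by (simp add: field_simps)
  then show ?thesis using le_M[OF \<open>0 \<le> x\<close> \<open>x \<le> r\<close>] by linarith
qed

lemma approx_additive_sum_axis:
  fixes h :: "real ^ 'd \<Rightarrow> real"
  assumes "h 0 = 0"
    and approx_add: "\<And>u v. norm1 u \<le> r \<Longrightarrow> norm1 v \<le> r \<Longrightarrow> norm1 (u + v) \<le> r \<Longrightarrow>
                        \<bar>h (u + v) - h u - h v\<bar> \<le> \<kappa>"
    and "norm1 x \<le> r"
  shows "\<bar>h (\<Sum>k\<in>F. axis k (x $ k)) - (\<Sum>k\<in>F. h (axis k (x $ k)))\<bar> \<le> real (card F) * \<kappa>"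
proof (induction F rule: infinite_finite_induct)
  case (insert k F)
  have "\<bar>h (axis k (x $ k) + (\<Sum>k\<in>F. axis k (x $ k))) - h (axis k (x $ k))
          - h (\<Sum>k\<in>F. axis k (x $ k))\<bar> \<le> \<kappa>"
    using approx_add component_le_norm1[of x k] norm1_sum_axis_le[of x F]
      norm1_sum_axis_le[of x "insert k F"] \<open>norm1 x \<le> r\<close> insert by simp
  then show ?case using insert by (simp add: ring_distribs)
qed (use \<open>h 0 = 0\<close> in simp_all)

lemma approx_additive_near_linear:
  fixes g :: "real ^ 'd \<Rightarrow> real"
  assumes "r > 0"
    and odd: "\<And>x. norm1 x \<le> r \<Longrightarrow> g (- x) = - g x"
    and bounded: "\<And>x. norm1 x \<le> r \<Longrightarrow> \<bar>g x\<bar> \<le> B"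
    and approx_add: "\<And>u v. norm1 u \<le> r \<Longrightarrow> norm1 v \<le> r \<Longrightarrow> norm1 (u + v) \<le> r \<Longrightarrow>
                        \<bar>g (u + v) - g u - g v\<bar> \<le> \<kappa>"
    and "norm1 x \<le> r"
  shows "\<bar>g x - x \<bullet> (\<chi> k. g (axis k r) / r)\<bar> \<le> 4 * real CARD('d) * \<kappa>"
proof -
  define m :: "real ^ 'd" where "m = (\<chi> k. g (axis k r) / r)"
  define h where "h x = g x - x \<bullet> m" for x
  have h_approx_add: "\<bar>h (u + v) - h u - h v\<bar> \<le> \<kappa>"
    if "norm1 u \<le> r" "norm1 v \<le> r" "norm1 (u + v) \<le> r" for u v
    using approx_add[OF that] unfolding h_def by (simp add: inner_add_left algebra_simps)
  have h_odd: "h (- u) = - h u" if "norm1 u \<le> r" for u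
    using odd[OF that] unfolding h_def by simp
  have h_axis: "h (axis k c) = g (axis k c) - c * g (axis k r) / r" for k c
    unfolding h_def m_def by (simp add: inner_axis')
  have axis_nonneg: "\<bar>h (axis k c)\<bar> \<le> 3 * \<kappa>" if "0 \<le> c" "c \<le> r" for k c
  proof (rule approx_additive_on_interval_bound[where h="\<lambda>c. h (axis k c)" and B="2 * B"])
    show "\<bar>h (axis k y)\<bar> \<le> 2 * B" if "0 \<le> y" "y \<le> r" for y
    proof -
      have "\<bar>y * g (axis k r) / r\<bar> \<le> \<bar>g (axis k r)\<bar>"
        using that \<open>r > 0\<close> by (simp add: abs_mult divide_le_eq mult_right_mono mult.commute)
      then show ?thesis
        using bounded[of "axis k y"] bounded[of "axis k r"] that \<open>r > 0\<close>
          abs_triangle_ineq4[of "g (axis k y)" "y * g (axis k r) / r"]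
        unfolding h_axis by simp
    qed
    show "\<bar>h (axis k (a + b)) - h (axis k a) - h (axis k b)\<bar> \<le> \<kappa>"
      if "0 \<le> a" "0 \<le> b" "a + b \<le> r" for a b
    proof -
      have sum: "axis k a + axis k b = axis k (a + b)" by (simp add: axis_def vec_eq_iff)
      show ?thesis using h_approx_add[of "axis k a" "axis k b"] that unfolding sum by simp
    qed
  qed (use \<open>r > 0\<close> that in \<open>simp_all add: h_axis\<close>)
  have axis_bound: "\<bar>h (axis k c)\<bar> \<le> 3 * \<kappa>" if "\<bar>c\<bar> \<le> r" for k c
  proof (cases "c \<ge> 0")
    case False
    have "axis k c = - axis k (- c)" by (simp add: axis_def vec_eq_iff)
    then show ?thesis using h_odd[of "axis k (- c)"] axis_nonneg[of "- c" k] False that by simp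
  qed (use axis_nonneg that in simp)
  have "\<bar>h x - (\<Sum>k\<in>UNIV. h (axis k (x $ k)))\<bar> \<le> real CARD('d) * \<kappa>"
    using approx_additive_sum_axis[OF _ h_approx_add \<open>norm1 x \<le> r\<close>, of UNIV] h_odd[of 0] \<open>r > 0\<close>
    by (simp add: sum_axis_UNIV)
  moreover have "\<bar>\<Sum>k\<in>UNIV. h (axis k (x $ k))\<bar> \<le> (\<Sum>k\<in>(UNIV :: 'd set). 3 * \<kappa>)"
    using axis_bound component_le_norm1 \<open>norm1 x \<le> r\<close> order_trans
    by (intro order_trans[OF sum_abs sum_mono]) blast
  ultimately show ?thesis unfolding h_def m_def by simp
qed

lemma abs_inner_le_norm1:
  fixes x v :: "real ^ 'd"
  assumes "\<And>k. \<bar>v $ k\<bar> \<le> B"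
  shows "\<bar>x \<bullet> v\<bar> \<le> norm1 x * B"
proof -
  have "\<bar>x \<bullet> v\<bar> \<le> (\<Sum>k\<in>UNIV. \<bar>x $ k\<bar> * B)"
    unfolding inner_vec_def inner_real_def
    by (intro order_trans[OF sum_abs sum_mono]) (simp add: abs_mult assms mult_left_mono)
  then show ?thesis unfolding norm1_def by (simp add: sum_distrib_right)
qed

lemma approx_linear_symmetric_near_bilinear:
  fixes F :: "real ^ 'd \<Rightarrow> real ^ 'd \<Rightarrow> real"
  assumes "r > 0"
    and sym: "\<And>x y. norm1 x \<le> r \<Longrightarrow> norm1 y \<le> r \<Longrightarrow> F x y = F y x"
    and approx_lin: "\<And>x y. norm1 x \<le> r \<Longrightarrow> norm1 y \<le> r \<Longrightarrow>
                        \<bar>F x y - x \<bullet> (\<chi> k. F (axis k r) y / r)\<bar> \<le> e"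
    and "norm1 x \<le> r" "norm1 y \<le> r"
  shows "\<bar>F x y - x \<bullet> ((\<chi> k l. F (axis l r) (axis k r) / r\<^sup>2) *v y)\<bar> \<le> 2 * e"
proof -
  define D where "D k = F (axis k r) y - y \<bullet> (\<chi> l. F (axis l r) (axis k r) / r)" for k
  have D_bound: "\<bar>D k / r\<bar> \<le> e / r" for k
    using approx_lin[OF \<open>norm1 y \<le> r\<close>, of "axis k r"] sym[of "axis k r" y] \<open>r > 0\<close> \<open>norm1 y \<le> r\<close>
    by (simp add: D_def divide_right_mono)
  have "(\<chi> k. F (axis k r) y / r) - (\<chi> k l. F (axis l r) (axis k r) / r\<^sup>2) *v y = (\<chi> k. D k / r)"
    unfolding D_def
    by (simp add: vec_eq_iff matrix_vector_mult_def inner_vec_def sum_divide_distrib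
        power2_eq_square diff_divide_distrib mult.commute)
  then have "\<bar>x \<bullet> (\<chi> k. F (axis k r) y / r) - x \<bullet> ((\<chi> k l. F (axis l r) (axis k r) / r\<^sup>2) *v y)\<bar>
      \<le> norm1 x * (e / r)"
    using abs_inner_le_norm1[of "\<chi> k. D k / r" "e / r" x] D_bound by (simp flip: inner_diff_right)
  also have "\<dots> \<le> e"
  proof -
    have "0 \<le> e / r" using D_bound[of undefined] by (meson abs_ge_zero order_trans)
    then show ?thesis
      using \<open>norm1 x \<le> r\<close> \<open>r > 0\<close> by (simp add: field_simps mult_left_mono zero_le_divide_iff)
  qed
  finally show ?thesis using approx_lin[OF \<open>norm1 x \<le> r\<close> \<open>norm1 y \<le> r\<close>] by linarith
qed

lemma polarization_approx_additive:
  fixes a :: "real ^ 'd \<Rightarrow> real"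
  assumes even: "\<And>x. norm1 x \<le> 2 * r \<Longrightarrow> a (- x) = a x"
    and approx_quad: "\<And>x y. norm1 x \<le> 2 * r \<Longrightarrow> norm1 y \<le> 2 * r \<Longrightarrow>
                        \<bar>a (x + y) + a (x - y) - 2 * a x - 2 * a y\<bar> \<le> \<kappa>"
    and u: "norm1 u \<le> r" and v: "norm1 v \<le> r" and y: "norm1 y \<le> r"
  shows "\<bar>(a (u + v + y) - a (u + v - y)) - (a (u + y) - a (u - y)) - (a (v + y) - a (v - y))\<bar>
           \<le> 4 * \<kappa>"
proof -
  define w where "w = (1/2) *\<^sub>R (u + v)"
  define d where "d = (1/2) *\<^sub>R (u - v)"
  have w: "norm1 w \<le> r" and d: "norm1 d \<le> r"
    unfolding w_def d_def using norm1_midpoint_le[OF u v] norm1_half_diff_le[OF u v] by auto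
  have r: "r \<ge> 0" using y norm1_nonneg[of y] by linarith
  have wy: "norm1 (w + y) \<le> 2 * r" "norm1 (w - y) \<le> 2 * r" and w2: "norm1 w \<le> 2 * r"
    and d2: "norm1 d \<le> 2 * r"
    using norm1_triangle[of w y] norm1_triangle_diff[of w y] w d y r by auto
  have ey: "a (- y) = a y" using even[of y] y r by simp
  have sums: "(w + y) + w = u + v + y" "(w - y) + w = u + v - y" "(w + y) + d = u + y"
      "(w + y) - d = v + y" "(w - y) + d = u - y" "(w - y) - d = v - y"
    unfolding w_def d_def by (simp_all add: algebra_simps scaleR_2[symmetric])
  have "\<bar>a (u + v + y) + a y - 2 * a (w + y) - 2 * a w\<bar> \<le> \<kappa>"
    using approx_quad[OF wy(1) w2] unfolding sums by simp
  moreover have "\<bar>a (u + v - y) + a y - 2 * a (w - y) - 2 * a w\<bar> \<le> \<kappa>"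
    using approx_quad[OF wy(2) w2] unfolding sums by (simp add: ey)
  moreover have "\<bar>a (u + y) + a (v + y) - 2 * a (w + y) - 2 * a d\<bar> \<le> \<kappa>"
    using approx_quad[OF wy(1) d2] unfolding sums .
  moreover have "\<bar>a (u - y) + a (v - y) - 2 * a (w - y) - 2 * a d\<bar> \<le> \<kappa>"
    using approx_quad[OF wy(2) d2] unfolding sums .
  ultimately show ?thesis by (smt (verit))
qed

lemma approx_quadratic_near_form:
  fixes a :: "real ^ 'd \<Rightarrow> real"
  assumes "R > 0"
    and even: "\<And>x. norm1 x \<le> R \<Longrightarrow> a (- x) = a x"
    and "a 0 = 0"
    and bounded: "\<And>x. norm1 x \<le> R \<Longrightarrow> \<bar>a x\<bar> \<le> B"
    and approx_quad: "\<And>x y. norm1 x \<le> R \<Longrightarrow> norm1 y \<le> R \<Longrightarrow>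
                        \<bar>a (x + y) + a (x - y) - 2 * a x - 2 * a y\<bar> \<le> \<kappa>"
  obtains A :: "real ^ 'd ^ 'd" where "transpose A = A"
    and "\<And>z. norm1 z \<le> R \<Longrightarrow> \<bar>a z - z \<bullet> (A *v z)\<bar> \<le> 32 * real CARD('d) * \<kappa>"
proof -
  define r where "r = R / 2"
  have "r > 0" and R_eq: "R = 2 * r" using \<open>R > 0\<close> by (simp_all add: r_def)
  \<comment> \<open>the polarisation \<open>F\<close> of \<open>a\<close> is approximately bilinear, and \<open>a z = F (z/2) (z/2)\<close>\<close>
  define F where "F x y = a (x + y) - a (x - y)" for x y
  have F_sym: "F x y = F y x" if "norm1 x \<le> r" "norm1 y \<le> r" for x y
    using even[of "x - y"] norm1_triangle_diff[of x y] that unfolding F_def R_eq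
    by (simp add: add.commute)
  have F_lin: "\<bar>F x y - x \<bullet> (\<chi> k. F (axis k r) y / r)\<bar> \<le> 4 * real CARD('d) * (4 * \<kappa>)"
    if x: "norm1 x \<le> r" and y: "norm1 y \<le> r" for x y
  proof (rule approx_additive_near_linear[where g="\<lambda>x. F x y" and B="2 * B", OF \<open>r > 0\<close> _ _ _ x])
    show "F (- x) y = - F x y" if "norm1 x \<le> r" for x
      using even[of "x - y"] even[of "x + y"] norm1_triangle_diff[of x y] norm1_triangle[of x y]
        that y unfolding F_def R_eq by (simp add: algebra_simps)
    show "\<bar>F x y\<bar> \<le> 2 * B" if "norm1 x \<le> r" for x
      using bounded[of "x + y"] bounded[of "x - y"] norm1_triangle_diff[of x y]
        norm1_triangle[of x y] that y unfolding F_def R_eq by simp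
    show "\<bar>F (u + v) y - F u y - F v y\<bar> \<le> 4 * \<kappa>"
      if "norm1 u \<le> r" "norm1 v \<le> r" "norm1 (u + v) \<le> r" for u v
      using polarization_approx_additive[of r a \<kappa> u v y] even approx_quad that y
      unfolding F_def R_eq by simp
  qed
  define C :: "real ^ 'd ^ 'd" where "C = (\<chi> k l. F (axis l r) (axis k r) / r\<^sup>2)"
  have C_bilinear: "\<bar>F x y - x \<bullet> (C *v y)\<bar> \<le> 32 * real CARD('d) * \<kappa>"
    if "norm1 x \<le> r" "norm1 y \<le> r" for x y
    using approx_linear_symmetric_near_bilinear[OF \<open>r > 0\<close> F_sym F_lin that] unfolding C_def
    by simp
  show ?thesis
  proof
    show "transpose ((1/4) *\<^sub>R C) = (1/4) *\<^sub>R C"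
      using F_sym[of "axis _ r" "axis _ r"] \<open>r > 0\<close>
      by (simp add: C_def transpose_def vec_eq_iff)
    fix z :: "real ^ 'd"
    assume "norm1 z \<le> R"
    then have "norm1 ((1/2) *\<^sub>R z) \<le> r" unfolding R_eq by (simp add: norm1_scaleR)
    moreover have "F ((1/2) *\<^sub>R z) ((1/2) *\<^sub>R z) = a z"
      unfolding F_def using \<open>a 0 = 0\<close> by (simp flip: scaleR_add_left)
    moreover have "((1/2) *\<^sub>R z) \<bullet> (C *v ((1/2) *\<^sub>R z)) = z \<bullet> (((1/4) *\<^sub>R C) *v z)"
      by (simp add: matrix_vector_mult_scaleR flip: scaleR_matrix_vector_assoc)
    ultimately show "\<bar>a z - z \<bullet> (((1/4) *\<^sub>R C) *v z)\<bar> \<le> 32 * real CARD('d) * \<kappa>"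
      using C_bilinear by metis
  qed
qed

lemma quadratic_form_le_from_norm1_ball:
  fixes A :: "real ^ 'd ^ 'd"
  assumes "R > 0" and le: "\<And>z. norm1 z \<le> R \<Longrightarrow> z \<bullet> (A *v z) \<le> c"
  shows "x \<bullet> (A *v x) \<le> c * real CARD('d) / R\<^sup>2 * (x \<bullet> x)"
proof (cases "x = 0")
  case False
  define N where "N = norm1 x"
  have "N > 0"
    using False norm_le_norm1[of x] zero_less_norm_iff[of x] unfolding N_def by linarith
  have "c \<ge> 0" using le[of 0] \<open>R > 0\<close> by simp
  have "norm1 ((R / N) *\<^sub>R x) \<le> R"
    using \<open>N > 0\<close> \<open>R > 0\<close> by (simp add: norm1_scaleR N_def)
  from le[OF this] have "(R / N)\<^sup>2 * (x \<bullet> (A *v x)) \<le> c"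
    by (simp add: matrix_vector_mult_scaleR power2_eq_square)
  then have "x \<bullet> (A *v x) \<le> c * N\<^sup>2 / R\<^sup>2"
    using \<open>N > 0\<close> \<open>R > 0\<close> by (simp add: field_simps power2_eq_square)
  also have "\<dots> \<le> c * (real CARD('d) * (x \<bullet> x)) / R\<^sup>2"
    using norm1_power2_le[of x] \<open>c \<ge> 0\<close> unfolding N_def power2_norm_eq_inner
    by (intro divide_right_mono mult_left_mono) auto
  finally show ?thesis by simp
qed simp

lemma bounded_quadratic_form_psd_shift:
  fixes A :: "real ^ 'd ^ 'd"
  assumes "R > 0" and "transpose A = A" and le: "\<And>z. norm1 z \<le> R \<Longrightarrow> z \<bullet> (A *v z) \<le> c"
  obtains Q :: "real ^ 'd ^ 'd" where "transpose Q = Q" and "\<And>x. 0 \<le> x \<bullet> (Q *v x)"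
    and "\<And>t. norm1 t \<le> R \<Longrightarrow> \<bar>t \<bullet> (Q *v t) + t \<bullet> (A *v t)\<bar> \<le> c * real CARD('d)"
proof
  define \<mu> where "\<mu> = c * real CARD('d) / R\<^sup>2"
  have "c \<ge> 0" using le[of 0] \<open>R > 0\<close> by simp
  have form: "x \<bullet> ((\<mu> *\<^sub>R mat 1 - A) *v x) = \<mu> * (x \<bullet> x) - x \<bullet> (A *v x)" for x
    by (simp add: matrix_vector_mult_diff_rdistrib inner_diff_right flip: scaleR_matrix_vector_assoc)
  show "transpose (\<mu> *\<^sub>R mat 1 - A) = \<mu> *\<^sub>R mat 1 - A"
    using \<open>transpose A = A\<close> by (simp add: vec_eq_iff transpose_def mat_def)
  show "0 \<le> x \<bullet> ((\<mu> *\<^sub>R mat 1 - A) *v x)" for x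
    unfolding form using quadratic_form_le_from_norm1_ball[OF \<open>R > 0\<close> le, of x]
    by (simp add: \<mu>_def)
  fix t :: "real ^ 'd"
  assume "norm1 t \<le> R"
  then have "t \<bullet> t \<le> R\<^sup>2"
    using norm_le_norm1[of t] norm1_nonneg[of t] \<open>R > 0\<close>
    by (simp add: power2_norm_eq_inner[symmetric] power_mono)
  then have "\<mu> * (t \<bullet> t) \<le> c * real CARD('d)"
    using \<open>R > 0\<close> \<open>c \<ge> 0\<close> by (simp add: \<mu>_def field_simps mult_left_mono)
  moreover have "0 \<le> \<mu> * (t \<bullet> t)" using \<open>c \<ge> 0\<close> by (simp add: \<mu>_def)
  ultimately show "\<bar>t \<bullet> ((\<mu> *\<^sub>R mat 1 - A) *v t) + t \<bullet> (A *v t)\<bar> \<le> c * real CARD('d)"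
    unfolding form by simp
qed

section \<open>Continuous logarithms\<close>

lemma exp_eq_1_imp_norm_ge_2pi:
  assumes "exp w = 1" "w \<noteq> 0"
  shows "2 * pi \<le> cmod w"
proof -
  obtain n :: int where "Re w = 0" and Im: "Im w = of_int (2 * n) * pi"
    using assms(1) by (auto simp: exp_eq_1)
  then have "n \<noteq> 0" using assms(2) by (auto simp: complex_eq_iff)
  then have "2 * pi * 1 \<le> 2 * pi * \<bar>real_of_int n\<bar>"
    by (intro mult_left_mono) auto
  also have "\<dots> = \<bar>Im w\<bar>" using Im by (simp add: abs_mult)
  finally show ?thesis using abs_Im_le_cmod[of w] by linarith
qed

lemma continuous_exp_eq_1_imp_0:
  fixes g :: "'a :: topological_space \<Rightarrow> complex"
  assumes "connected S" "continuous_on S g"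
    and exp_1: "\<And>z. z \<in> S \<Longrightarrow> exp (g z) = 1"
    and "z0 \<in> S" "g z0 = 0" "z \<in> S"
  shows "g z = 0"
proof -
  have "g constant_on S"
  proof (rule continuous_discrete_range_constant[OF assms(1,2)])
    fix x assume "x \<in> S"
    have "2 * pi \<le> norm (g y - g x)" if "y \<in> S" "g y \<noteq> g x" for y
      using exp_1[OF \<open>x \<in> S\<close>] exp_1[OF \<open>y \<in> S\<close>] that
      by (intro exp_eq_1_imp_norm_ge_2pi) (simp_all add: exp_diff)
    then show "\<exists>e>0. \<forall>y. y \<in> S \<and> g y \<noteq> g x \<longrightarrow> e \<le> norm (g y - g x)"
      by (intro exI[of _ "2 * pi"]) auto
  qed
  then show ?thesis using assms(4-) unfolding constant_on_def by metis
qed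

lemma hermitian_continuous_log:
  fixes f :: "real ^ 'd \<Rightarrow> complex"
  assumes "T \<ge> 0" and cont: "continuous_on {x. norm1 x \<le> T} f" and "f 0 = 1"
    and nonzero: "\<And>x. norm1 x \<le> T \<Longrightarrow> f x \<noteq> 0"
    and hermitian: "\<And>x. norm1 x \<le> T \<Longrightarrow> f (- x) = cnj (f x)"
  obtains \<psi> where "continuous_on {x. norm1 x \<le> T} \<psi>"
    and "\<And>x. norm1 x \<le> T \<Longrightarrow> exp (\<psi> x) = f x" and "\<psi> 0 = 0"
    and "\<And>x. norm1 x \<le> T \<Longrightarrow> \<psi> (- x) = cnj (\<psi> x)"
proof -
  define D where "D = {x :: real ^ 'd. norm1 x \<le> T}"
  have "convex D" unfolding D_def by (rule convex_norm1_ball)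
  have "0 \<in> D" and uminus_D: "\<And>x. x \<in> D \<Longrightarrow> - x \<in> D"
    unfolding D_def using \<open>T \<ge> 0\<close> by auto
  obtain g where "continuous_on D g" and g: "\<And>x. x \<in> D \<Longrightarrow> f x = exp (g x)"
    using continuous_logarithm_on_contractible[OF cont[folded D_def]
        convex_imp_contractible[OF \<open>convex D\<close>]] nonzero
    unfolding D_def by blast
  define \<psi> where "\<psi> x = g x - g 0" for x
  have cont_\<psi>: "continuous_on D \<psi>"
    unfolding \<psi>_def by (intro continuous_intros \<open>continuous_on D g\<close>)
  have exp_\<psi>: "exp (\<psi> x) = f x" if "x \<in> D" for x
    unfolding \<psi>_def exp_diff using g[OF that] g[OF \<open>0 \<in> D\<close>] \<open>f 0 = 1\<close> by simp
  have "\<psi> (- x) - cnj (\<psi> x) = 0" if "x \<in> D" for x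
  proof (rule continuous_exp_eq_1_imp_0[OF convex_connected[OF \<open>convex D\<close>] _ _ \<open>0 \<in> D\<close> _ that])
    show "continuous_on D (\<lambda>x. \<psi> (- x) - cnj (\<psi> x))"
      by (intro continuous_intros continuous_on_compose2[OF cont_\<psi>]) (auto simp: uminus_D)
    show "exp (\<psi> (- x) - cnj (\<psi> x)) = 1" if "x \<in> D" for x
      using exp_\<psi>[OF that] exp_\<psi>[OF uminus_D[OF that]] hermitian[of x] nonzero[of x] that
      by (simp add: exp_diff exp_cnj[symmetric] D_def)
  qed (simp add: \<psi>_def)
  then show ?thesis
    using that[of \<psi>] cont_\<psi> exp_\<psi> unfolding D_def by (simp add: \<psi>_def)
qed

lemma continuous_log_near_1_bound:
  fixes L :: "'a :: topological_space \<Rightarrow> complex"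
  assumes "connected S" "continuous_on S L" "s0 \<in> S" "L s0 = 0"
    and near_1: "\<And>s. s \<in> S \<Longrightarrow> cmod (exp (L s) - 1) \<le> \<eta>"
    and "\<eta> \<le> 1/3" and "s \<in> S"
  shows "cmod (L s) \<le> 3/2 * \<eta>"
proof -
  have "\<eta> \<ge> 0" using near_1[OF \<open>s0 \<in> S\<close>] \<open>L s0 = 0\<close> by simp
  have Re_pos: "Re (exp (L s)) > 0" if "s \<in> S" for s
    using abs_Re_le_cmod[of "exp (L s) - 1"] near_1[OF that] \<open>\<eta> \<le> 1/3\<close> by simp
  have nonpos: "exp (L s) \<notin> \<real>\<^sub>\<le>\<^sub>0" if "s \<in> S" for s
    using Re_pos[OF that] by (auto elim!: nonpos_Reals_cases)
  \<comment> \<open>on the right half plane \<open>Ln\<close> is continuous, so \<open>L\<close> is the principal logarithm of \<open>exp \<circ> L\<close>\<close>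
  have principal: "L s - Ln (exp (L s)) = 0" if "s \<in> S" for s
  proof (rule continuous_exp_eq_1_imp_0[where g="\<lambda>s. L s - Ln (exp (L s))", OF \<open>connected S\<close> _ _
        \<open>s0 \<in> S\<close> _ that])
    show "continuous_on S (\<lambda>s. L s - Ln (exp (L s)))"
      by (intro continuous_intros \<open>continuous_on S L\<close> continuous_on_Ln' nonpos)
  qed (use nonpos \<open>L s0 = 0\<close> in \<open>auto simp: exp_diff\<close>)
  define z where "z = exp (L s) - 1"
  have "cmod z \<le> \<eta>" unfolding z_def by (rule near_1[OF \<open>s \<in> S\<close>])
  then have "cmod z < 1" using \<open>\<eta> \<le> 1/3\<close> by linarith
  have "cmod (L s - z) \<le> (cmod z)\<^sup>2 / (1 - cmod z)"
    using Ln_approx_linear[OF \<open>cmod z < 1\<close>] principal[OF \<open>s \<in> S\<close>] by (simp add: z_def)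
  also have "\<dots> \<le> \<eta>\<^sup>2 / (1 - \<eta>)"
    using \<open>cmod z \<le> \<eta>\<close> \<open>\<eta> \<le> 1/3\<close> by (intro frac_le power_mono) auto
  also have "\<dots> \<le> \<eta> / 2"
    using \<open>\<eta> \<ge> 0\<close> \<open>\<eta> \<le> 1/3\<close> mult_left_mono[of "\<eta> * 3" 1 \<eta>]
    by (simp add: power2_eq_square field_simps)
  finally show ?thesis using \<open>cmod z \<le> \<eta>\<close> norm_triangle_sub[of "L s" z] by linarith
qed

lemma norm_exp_minus_1_le: "cmod (exp z - 1) \<le> exp (cmod z) - 1"
proof -
  have summable: "summable (\<lambda>n. norm (z ^ Suc n /\<^sub>R fact (Suc n)))"
    using summable_norm_exp[of z] by (subst summable_Suc_iff)
  have "cmod (exp z - 1) = norm (\<Sum>n. z ^ Suc n /\<^sub>R fact (Suc n))"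
    using exp_first_term[of z] by (simp add: scaleR_conv_of_real divide_inverse_commute)
  also have "\<dots> \<le> (\<Sum>n. norm (z ^ Suc n /\<^sub>R fact (Suc n)))"
    by (rule summable_norm[OF summable])
  also have "\<dots> = (\<Sum>n. cmod z ^ Suc n /\<^sub>R fact (Suc n))"
    by (simp add: norm_mult norm_power)
  also have "\<dots> = exp (cmod z) - 1"
    using exp_first_term[of "cmod z"] by (simp add: divide_inverse_commute)
  finally show ?thesis .
qed

lemma norm_exp_diff_le:
  assumes "cmod (\<psi> - \<phi>) \<le> 1"
  shows "cmod (exp \<psi> - exp \<phi>) \<le> 2 * cmod (\<psi> - \<phi>) * cmod (exp \<phi>)"
proof -
  define c where "c = cmod (\<psi> - \<phi>)"
  have "exp c \<le> 1 + c + c\<^sup>2"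
    using exp_bound[of c] assms by (simp add: c_def)
  moreover have "c\<^sup>2 \<le> c"
    using assms by (simp add: c_def power2_eq_square mult_left_le)
  ultimately have "cmod (exp (\<psi> - \<phi>) - 1) \<le> 2 * c"
    using norm_exp_minus_1_le[of "\<psi> - \<phi>"] unfolding c_def by linarith
  moreover have "exp \<psi> - exp \<phi> = exp \<phi> * (exp (\<psi> - \<phi>) - 1)"
    by (simp add: exp_diff field_simps)
  ultimately show ?thesis
    by (simp add: norm_mult c_def mult_left_mono mult.commute)
qed

section \<open>The logarithmic form of the approximate functional equation\<close>

text \<open>If \<open>exp \<circ> \<psi>\<^sub>i = f\<^sub>i\<close>, then \<open>exp (log_defect \<psi>\<^sub>1 \<psi>\<^sub>2 x y)\<close> is the quotient of
  \<open>f\<^sub>1 (s + t) f\<^sub>2 (s - t)\<close> by \<open>f\<^sub>1 s f\<^sub>2 s f\<^sub>1 t f\<^sub>2 (- t)\<close> at \<open>s = x + y\<close>, \<open>t = x - y\<close>.\<close>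

definition log_defect ::
    "(real ^ 'd \<Rightarrow> complex) \<Rightarrow> (real ^ 'd \<Rightarrow> complex) \<Rightarrow> real ^ 'd \<Rightarrow> real ^ 'd \<Rightarrow> complex" where
  "log_defect \<psi>1 \<psi>2 x y =
     \<psi>1 (2 *\<^sub>R x) + \<psi>2 (2 *\<^sub>R y) - \<psi>1 (x + y) - \<psi>2 (x + y) - \<psi>1 (x - y) - \<psi>2 (y - x)"

lemma exp_log_defect_near_1:
  fixes f1 f2 \<psi>1 \<psi>2 :: "real ^ 'd \<Rightarrow> complex"
  assumes "p > 0"
    and exp1: "\<And>x. norm1 x \<le> T \<Longrightarrow> exp (\<psi>1 x) = f1 x"
    and exp2: "\<And>x. norm1 x \<le> T \<Longrightarrow> exp (\<psi>2 x) = f2 x"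
    and lower1: "\<And>x. norm1 x \<le> T \<Longrightarrow> p \<le> cmod (f1 x)"
    and lower2: "\<And>x. norm1 x \<le> T \<Longrightarrow> p \<le> cmod (f2 x)"
    and approx: "\<And>s t. norm1 s \<le> T \<Longrightarrow> norm1 t \<le> T \<Longrightarrow>
                   cmod (f1 (s + t) * f2 (s - t) - f1 s * f2 s * (f1 t * f2 (- t))) \<le> \<epsilon>"
    and "norm1 x \<le> T/2" "norm1 y \<le> T/2"
  shows "cmod (exp (log_defect \<psi>1 \<psi>2 x y) - 1) \<le> \<epsilon> / p ^ 4"
proof -
  note in_ball = norm1_half_ball_combinations[OF assms(7,8)]
  define A where "A = f1 (2 *\<^sub>R x) * f2 (2 *\<^sub>R y)"
  define B where "B = f1 (x + y) * f2 (x + y) * (f1 (x - y) * f2 (y - x))"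
  have "p * p * (p * p) \<le> cmod B"
    unfolding B_def norm_mult using in_ball lower1 lower2 \<open>p > 0\<close>
    by (intro mult_mono) (auto intro: mult_mono)
  then have "p ^ 4 \<le> cmod B" by (simp add: power4_eq_xxxx mult_ac)
  have "(x + y) + (x - y) = 2 *\<^sub>R x" "(x + y) - (x - y) = 2 *\<^sub>R y" "- (x - y) = y - x"
    by (simp_all add: scaleR_2 algebra_simps)
  then have "cmod (A - B) \<le> \<epsilon>"
    using approx[of "x + y" "x - y"] in_ball unfolding A_def B_def by simp
  have "exp (log_defect \<psi>1 \<psi>2 x y) = A / B"
    using in_ball unfolding log_defect_def A_def B_def by (simp add: exp_diff exp_add exp1 exp2)
  moreover have "B \<noteq> 0"
    using \<open>p ^ 4 \<le> cmod B\<close> \<open>p > 0\<close> by (metis norm_zero not_le zero_less_power)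
  ultimately have "exp (log_defect \<psi>1 \<psi>2 x y) - 1 = (A - B) / B"
    by (simp add: diff_divide_distrib)
  then have "cmod (exp (log_defect \<psi>1 \<psi>2 x y) - 1) = cmod (A - B) / cmod B"
    by (simp add: norm_divide)
  also have "\<dots> \<le> \<epsilon> / p ^ 4"
    using \<open>cmod (A - B) \<le> \<epsilon>\<close> \<open>p ^ 4 \<le> cmod B\<close> \<open>p > 0\<close>
    by (intro frac_le) (auto intro: order_trans[OF norm_ge_zero])
  finally show ?thesis .
qed

lemma log_defect_bound:
  fixes f1 f2 \<psi>1 \<psi>2 :: "real ^ 'd \<Rightarrow> complex"
  assumes "p > 0"
    and cont1: "continuous_on {x. norm1 x \<le> T} \<psi>1"
    and cont2: "continuous_on {x. norm1 x \<le> T} \<psi>2"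
    and exp1: "\<And>x. norm1 x \<le> T \<Longrightarrow> exp (\<psi>1 x) = f1 x"
    and exp2: "\<And>x. norm1 x \<le> T \<Longrightarrow> exp (\<psi>2 x) = f2 x"
    and "\<psi>1 0 = 0" "\<psi>2 0 = 0"
    and lower1: "\<And>x. norm1 x \<le> T \<Longrightarrow> p \<le> cmod (f1 x)"
    and lower2: "\<And>x. norm1 x \<le> T \<Longrightarrow> p \<le> cmod (f2 x)"
    and approx: "\<And>s t. norm1 s \<le> T \<Longrightarrow> norm1 t \<le> T \<Longrightarrow>
                   cmod (f1 (s + t) * f2 (s - t) - f1 s * f2 s * (f1 t * f2 (- t))) \<le> \<epsilon>"
    and "\<epsilon> / p ^ 4 \<le> 1/3"
    and "norm1 x \<le> T/2" "norm1 y \<le> T/2"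
  shows "cmod (log_defect \<psi>1 \<psi>2 x y) \<le> 3/2 * (\<epsilon> / p ^ 4)"
proof -
  define H where "H = {x :: real ^ 'd. norm1 x \<le> T/2}"
  have cont: "continuous_on (H \<times> H) (\<lambda>q. log_defect \<psi>1 \<psi>2 (fst q) (snd q))"
    unfolding log_defect_def
    by (intro continuous_intros continuous_on_compose2[OF cont1] continuous_on_compose2[OF cont2])
       (auto simp: H_def mem_Times_iff norm1_half_ball_combinations)
  have near_1: "cmod (exp (log_defect \<psi>1 \<psi>2 (fst q) (snd q)) - 1) \<le> \<epsilon> / p ^ 4"
    if "q \<in> H \<times> H" for q
    using exp_log_defect_near_1[OF \<open>p > 0\<close> exp1 exp2 lower1 lower2 approx] that
    unfolding H_def by (auto simp: mem_Times_iff)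
  have conn: "connected (H \<times> H)"
    unfolding H_def by (intro convex_connected convex_Times convex_norm1_ball)
  have in_H: "(0, 0) \<in> H \<times> H" "(x, y) \<in> H \<times> H"
    using \<open>norm1 x \<le> T/2\<close> \<open>norm1 y \<le> T/2\<close> norm1_nonneg[of x] unfolding H_def by auto
  have "log_defect \<psi>1 \<psi>2 0 0 = 0"
    using \<open>\<psi>1 0 = 0\<close> \<open>\<psi>2 0 = 0\<close> by (simp add: log_defect_def)
  then show ?thesis
    using continuous_log_near_1_bound[OF conn cont in_H(1) _ near_1 \<open>\<epsilon> / p ^ 4 \<le> 1/3\<close> in_H(2)]
    by simp
qed

lemma even_defect_near_form:
  fixes P1 P2 :: "real ^ 'd \<Rightarrow> real"
  assumes "T > 0"
    and even1: "\<And>x. norm1 x \<le> T \<Longrightarrow> P1 (- x) = P1 x"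
    and even2: "\<And>x. norm1 x \<le> T \<Longrightarrow> P2 (- x) = P2 x"
    and "P1 0 = 0" "P2 0 = 0"
    and bounded1: "\<And>x. norm1 x \<le> T \<Longrightarrow> \<bar>P1 x\<bar> \<le> B"
    and bounded2: "\<And>x. norm1 x \<le> T \<Longrightarrow> \<bar>P2 x\<bar> \<le> B"
    and defect: "\<And>x y. norm1 x \<le> T/2 \<Longrightarrow> norm1 y \<le> T/2 \<Longrightarrow>
        \<bar>P1 (2 *\<^sub>R x) + P2 (2 *\<^sub>R y) - P1 (x + y) - P2 (x + y) - P1 (x - y) - P2 (x - y)\<bar> \<le> \<delta>"
  obtains A :: "real ^ 'd ^ 'd" where "transpose A = A"
    and "\<And>t. norm1 t \<le> T/2 \<Longrightarrow> \<bar>P1 t - t \<bullet> (A *v t) / 2\<bar> \<le> (192 * real CARD('d) + 1) * \<delta>"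
    and "\<And>t. norm1 t \<le> T/2 \<Longrightarrow> \<bar>P2 t - t \<bullet> (A *v t) / 2\<bar> \<le> (192 * real CARD('d) + 1) * \<delta>"
proof -
  define R where "R = T / 2"
  define n where "n = real CARD('d)"
  have "R > 0" using \<open>T > 0\<close> by (simp add: R_def)
  have in_T: "norm1 x \<le> T" if "norm1 x \<le> R" for x
    using that \<open>T > 0\<close> by (simp add: R_def)
  have doubling1: "\<bar>P1 (2 *\<^sub>R x) - 2 * P1 x - 2 * P2 x\<bar> \<le> \<delta>" if "norm1 x \<le> R" for x
    using defect[of x 0] that even2[OF in_T[OF that]] \<open>R > 0\<close> \<open>P2 0 = 0\<close>
    by (simp add: R_def)
  have doubling2: "\<bar>P2 (2 *\<^sub>R y) - 2 * P1 y - 2 * P2 y\<bar> \<le> \<delta>" if "norm1 y \<le> R" for y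
    using defect[of 0 y] that even1[OF in_T[OF that]] even2[OF in_T[OF that]] \<open>R > 0\<close>
      \<open>P1 0 = 0\<close> by (simp add: R_def)
  define a where "a x = P1 x + P2 x" for x
  \<comment> \<open>the sum of the defect and the two doubling errors is the quadratic defect of \<open>a\<close>\<close>
  have approx_quad: "\<bar>a (x + y) + a (x - y) - 2 * a x - 2 * a y\<bar> \<le> 3 * \<delta>"
    if "norm1 x \<le> R" "norm1 y \<le> R" for x y
    using defect[OF that[unfolded R_def]] doubling1[OF that(1)] doubling2[OF that(2)]
    unfolding a_def by (smt (verit))
  have "a (- x) = a x" if "norm1 x \<le> R" for x
    using even1 even2 in_T[OF that] by (simp add: a_def)
  moreover have "\<bar>a x\<bar> \<le> 2 * B" if "norm1 x \<le> R" for x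
    using bounded1 bounded2 in_T[OF that] unfolding a_def by (smt (verit))
  moreover have "a 0 = 0" using \<open>P1 0 = 0\<close> \<open>P2 0 = 0\<close> by (simp add: a_def)
  ultimately obtain A where "transpose A = A"
    and A: "\<And>z. norm1 z \<le> R \<Longrightarrow> \<bar>a z - z \<bullet> (A *v z)\<bar> \<le> 32 * n * (3 * \<delta>)"
    using approx_quadratic_near_form[OF \<open>R > 0\<close> _ _ _ approx_quad] unfolding n_def by blast
  define c where "c = (192 * n + 1) * \<delta>"
  have close: "\<bar>P1 t - t \<bullet> (A *v t) / 2\<bar> \<le> c \<and> \<bar>P2 t - t \<bullet> (A *v t) / 2\<bar> \<le> c"
    if "norm1 t \<le> R" for t
  proof -
    define h where "h = (1/2) *\<^sub>R t"
    have "norm1 h \<le> R" using that \<open>R > 0\<close> by (simp add: h_def norm1_scaleR)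
    have "2 *\<^sub>R h = t" "t \<bullet> (A *v t) / 2 = 2 * (h \<bullet> (A *v h))"
      by (simp_all add: h_def matrix_vector_mult_scaleR)
    then show ?thesis
      using doubling1[OF \<open>norm1 h \<le> R\<close>] doubling2[OF \<open>norm1 h \<le> R\<close>] A[OF \<open>norm1 h \<le> R\<close>]
      unfolding c_def a_def by (simp add: algebra_simps) linarith
  qed
  then show ?thesis
    using that[OF \<open>transpose A = A\<close>] unfolding R_def c_def n_def by blast
qed

lemma even_defect_near_quadratic_form:
  fixes P1 P2 :: "real ^ 'd \<Rightarrow> real"
  assumes "T > 0"
    and even1: "\<And>x. norm1 x \<le> T \<Longrightarrow> P1 (- x) = P1 x"
    and even2: "\<And>x. norm1 x \<le> T \<Longrightarrow> P2 (- x) = P2 x"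
    and "P1 0 = 0" "P2 0 = 0"
    and bounded1: "\<And>x. norm1 x \<le> T \<Longrightarrow> \<bar>P1 x\<bar> \<le> B"
    and bounded2: "\<And>x. norm1 x \<le> T \<Longrightarrow> \<bar>P2 x\<bar> \<le> B"
    and nonpos: "\<And>x. norm1 x \<le> T \<Longrightarrow> P1 x \<le> 0"
    and defect: "\<And>x y. norm1 x \<le> T/2 \<Longrightarrow> norm1 y \<le> T/2 \<Longrightarrow>
        \<bar>P1 (2 *\<^sub>R x) + P2 (2 *\<^sub>R y) - P1 (x + y) - P2 (x + y) - P1 (x - y) - P2 (x - y)\<bar> \<le> \<delta>"
  obtains Q :: "real ^ 'd ^ 'd" where "transpose Q = Q" and "\<And>x. 0 \<le> x \<bullet> (Q *v x)"
    and "\<And>t. norm1 t \<le> T/2 \<Longrightarrow>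
           \<bar>P1 t + t \<bullet> (Q *v t) / 2\<bar> \<le> (192 * real CARD('d) + 1) * (real CARD('d) + 1) * \<delta>"
    and "\<And>t. norm1 t \<le> T/2 \<Longrightarrow>
           \<bar>P2 t + t \<bullet> (Q *v t) / 2\<bar> \<le> (192 * real CARD('d) + 1) * (real CARD('d) + 1) * \<delta>"
proof -
  define R where "R = T / 2"
  define n where "n = real CARD('d)"
  define c where "c = (192 * n + 1) * \<delta>"
  have "R > 0" using \<open>T > 0\<close> by (simp add: R_def)
  obtain A where "transpose A = A"
    and close: "\<And>t. norm1 t \<le> R \<Longrightarrow> \<bar>P1 t - t \<bullet> (A *v t) / 2\<bar> \<le> c"
      "\<And>t. norm1 t \<le> R \<Longrightarrow> \<bar>P2 t - t \<bullet> (A *v t) / 2\<bar> \<le> c"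
    using even_defect_near_form[OF assms(1-7) defect] unfolding R_def c_def n_def by blast
  have form_le: "z \<bullet> (A *v z) \<le> 2 * c" if "norm1 z \<le> R" for z
  proof -
    have "norm1 z \<le> T" using that \<open>R > 0\<close> by (simp add: R_def)
    from nonpos[OF this] close(1)[OF that] show ?thesis by linarith
  qed
  obtain Q where "transpose Q = Q" "\<And>x. 0 \<le> x \<bullet> (Q *v x)"
    and Q: "\<And>t. norm1 t \<le> R \<Longrightarrow> \<bar>t \<bullet> (Q *v t) + t \<bullet> (A *v t)\<bar> \<le> 2 * c * n"
    using bounded_quadratic_form_psd_shift[OF \<open>R > 0\<close> \<open>transpose A = A\<close> form_le]
    unfolding n_def by blast
  have "\<bar>P t + t \<bullet> (Q *v t) / 2\<bar> \<le> (192 * n + 1) * (n + 1) * \<delta>"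
    if "norm1 t \<le> R" "\<bar>P t - t \<bullet> (A *v t) / 2\<bar> \<le> c" for P t
    using that(2) Q[OF that(1)] unfolding c_def by (simp add: algebra_simps)
  then show ?thesis
    using that[OF \<open>transpose Q = Q\<close> \<open>\<And>x. 0 \<le> x \<bullet> (Q *v x)\<close>] close
    unfolding R_def n_def by blast
qed

lemma mixed_defect_approx_additive:
  fixes \<sigma> \<alpha> :: "real ^ 'd \<Rightarrow> real"
  assumes odd_\<sigma>: "\<And>x. norm1 x \<le> 2 * R \<Longrightarrow> \<sigma> (- x) = - \<sigma> x"
    and odd_\<alpha>: "\<And>x. norm1 x \<le> 2 * R \<Longrightarrow> \<alpha> (- x) = - \<alpha> x"
    and mixed: "\<And>x y. norm1 x \<le> R \<Longrightarrow> norm1 y \<le> R \<Longrightarrow>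
                  \<bar>\<sigma> x + \<alpha> x + \<sigma> y - \<alpha> y - \<sigma> (x + y) - \<alpha> (x - y)\<bar> \<le> \<kappa>"
    and u: "norm1 u \<le> R" and v: "norm1 v \<le> R"
  shows "\<bar>\<sigma> (u + v) - \<sigma> u - \<sigma> v\<bar> \<le> \<kappa>" and "\<bar>\<alpha> (u + v) - \<alpha> u - \<alpha> v\<bar> \<le> \<kappa>"
proof -
  have "R \<ge> 0" using u norm1_nonneg[of u] by linarith
  then have "norm1 v \<le> 2 * R" "norm1 (u + v) \<le> 2 * R" "norm1 (u - v) \<le> 2 * R"
    using u v norm1_triangle[of u v] norm1_triangle_diff[of u v] by auto
  note odd = odd_\<sigma>[OF this(1)] odd_\<alpha>[OF this(1)] odd_\<alpha>[OF this(2)] odd_\<alpha>[OF this(3)]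
  have "norm1 (- v) \<le> R" using v by simp
  have eqs: "v + u = u + v" "v - u = - (u - v)" "u + - v = u - v" "u - - v = u + v"
    "- v + u = u - v" "- v - u = - (u + v)" by simp_all
  \<comment> \<open>averaging \<open>mixed\<close> at \<open>(u, v)\<close> and \<open>(v, u)\<close> isolates \<open>\<sigma>\<close>, at \<open>(u, - v)\<close> and \<open>(- v, u)\<close> isolates \<open>\<alpha>\<close>\<close>
  show "\<bar>\<sigma> (u + v) - \<sigma> u - \<sigma> v\<bar> \<le> \<kappa>"
    using mixed[OF u v] mixed[OF v u, unfolded eqs odd] by (smt (verit))
  show "\<bar>\<alpha> (u + v) - \<alpha> u - \<alpha> v\<bar> \<le> \<kappa>"
    using mixed[OF u \<open>norm1 (- v) \<le> R\<close>, unfolded eqs odd]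
      mixed[OF \<open>norm1 (- v) \<le> R\<close> u, unfolded eqs odd] by (smt (verit))
qed

lemma mixed_defect_near_linear:
  fixes \<sigma> \<alpha> :: "real ^ 'd \<Rightarrow> real"
  assumes "R > 0"
    and odd_\<sigma>: "\<And>x. norm1 x \<le> 2 * R \<Longrightarrow> \<sigma> (- x) = - \<sigma> x"
    and odd_\<alpha>: "\<And>x. norm1 x \<le> 2 * R \<Longrightarrow> \<alpha> (- x) = - \<alpha> x"
    and bounded_\<sigma>: "\<And>x. norm1 x \<le> R \<Longrightarrow> \<bar>\<sigma> x\<bar> \<le> B"
    and bounded_\<alpha>: "\<And>x. norm1 x \<le> R \<Longrightarrow> \<bar>\<alpha> x\<bar> \<le> B"
    and mixed: "\<And>x y. norm1 x \<le> R \<Longrightarrow> norm1 y \<le> R \<Longrightarrow>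
                  \<bar>\<sigma> x + \<alpha> x + \<sigma> y - \<alpha> y - \<sigma> (x + y) - \<alpha> (x - y)\<bar> \<le> \<kappa>"
    and "norm1 x \<le> R"
  shows "\<bar>\<sigma> x - x \<bullet> (\<chi> k. \<sigma> (axis k R) / R)\<bar> \<le> 4 * real CARD('d) * \<kappa>"
    and "\<bar>\<alpha> x - x \<bullet> (\<chi> k. \<alpha> (axis k R) / R)\<bar> \<le> 4 * real CARD('d) * \<kappa>"
proof -
  have "norm1 y \<le> 2 * R" if "norm1 y \<le> R" for y using that \<open>R > 0\<close> by simp
  note odd = odd_\<sigma>[OF this] odd_\<alpha>[OF this]
  note approx_add = mixed_defect_approx_additive[OF odd_\<sigma> odd_\<alpha> mixed]
  show "\<bar>\<sigma> x - x \<bullet> (\<chi> k. \<sigma> (axis k R) / R)\<bar> \<le> 4 * real CARD('d) * \<kappa>"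
    by (rule approx_additive_near_linear[OF \<open>R > 0\<close> odd(1) bounded_\<sigma> approx_add(1) \<open>norm1 x \<le> R\<close>];
        assumption)
  show "\<bar>\<alpha> x - x \<bullet> (\<chi> k. \<alpha> (axis k R) / R)\<bar> \<le> 4 * real CARD('d) * \<kappa>"
    by (rule approx_additive_near_linear[OF \<open>R > 0\<close> odd(2) bounded_\<alpha> approx_add(2) \<open>norm1 x \<le> R\<close>];
        assumption)
qed

lemma odd_defect_near_linear:
  fixes I1 I2 :: "real ^ 'd \<Rightarrow> real"
  assumes "T > 0"
    and odd1: "\<And>x. norm1 x \<le> T \<Longrightarrow> I1 (- x) = - I1 x"
    and odd2: "\<And>x. norm1 x \<le> T \<Longrightarrow> I2 (- x) = - I2 x"
    and bounded1: "\<And>x. norm1 x \<le> T \<Longrightarrow> \<bar>I1 x\<bar> \<le> B"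
    and bounded2: "\<And>x. norm1 x \<le> T \<Longrightarrow> \<bar>I2 x\<bar> \<le> B"
    and defect: "\<And>x y. norm1 x \<le> T/2 \<Longrightarrow> norm1 y \<le> T/2 \<Longrightarrow>
        \<bar>I1 (2 *\<^sub>R x) + I2 (2 *\<^sub>R y) - I1 (x + y) - I2 (x + y) - I1 (x - y) + I2 (x - y)\<bar> \<le> \<delta>"
  obtains m1 m2 :: "real ^ 'd"
  where "\<And>t. norm1 t \<le> T/2 \<Longrightarrow> \<bar>I1 t - t \<bullet> m1\<bar> \<le> (24 * real CARD('d) + 1) * \<delta>"
    and "\<And>t. norm1 t \<le> T/2 \<Longrightarrow> \<bar>I2 t - t \<bullet> m2\<bar> \<le> (24 * real CARD('d) + 1) * \<delta>"
proof -
  define R where "R = T / 2"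
  have "R > 0" and T_eq: "T = 2 * R" using \<open>T > 0\<close> by (simp_all add: R_def)
  have in_T: "norm1 x \<le> T" if "norm1 x \<le> R" for x
    using that \<open>R > 0\<close> by (simp add: T_eq)
  have "I1 0 = 0" "I2 0 = 0" using odd1[of 0] odd2[of 0] \<open>T > 0\<close> by simp_all
  have doubling: "\<bar>I1 (2 *\<^sub>R x) - 2 * I1 x\<bar> \<le> \<delta>" "\<bar>I2 (2 *\<^sub>R x) - 2 * I2 x\<bar> \<le> \<delta>"
    if "norm1 x \<le> R" for x
    using defect[of x 0] defect[of 0 x] that odd1[OF in_T[OF that]] odd2[OF in_T[OF that]]
      \<open>R > 0\<close> \<open>I1 0 = 0\<close> \<open>I2 0 = 0\<close> by (simp_all add: R_def)
  define \<sigma> where "\<sigma> x = I1 x + I2 x" for x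
  define \<alpha> where "\<alpha> x = I1 x - I2 x" for x
  have odd: "\<sigma> (- x) = - \<sigma> x" "\<alpha> (- x) = - \<alpha> x" if "norm1 x \<le> 2 * R" for x
    using odd1 odd2 that by (simp_all add: \<sigma>_def \<alpha>_def T_eq)
  have "\<bar>\<sigma> x + \<alpha> x + \<sigma> y - \<alpha> y - \<sigma> (x + y) - \<alpha> (x - y)\<bar> \<le> 3 * \<delta>"
    if "norm1 x \<le> R" "norm1 y \<le> R" for x y
    using defect[OF that[unfolded R_def]] doubling(1)[OF that(1)] doubling(2)[OF that(2)]
    unfolding \<sigma>_def \<alpha>_def by (smt (verit))
  note mixed = this
  have bounded: "\<bar>\<sigma> x\<bar> \<le> 2 * B" "\<bar>\<alpha> x\<bar> \<le> 2 * B" if "norm1 x \<le> R" for x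
    using bounded1[OF in_T[OF that]] bounded2[OF in_T[OF that]] unfolding \<sigma>_def \<alpha>_def
    by (smt (verit))+
  have linear: "\<bar>\<sigma> x - x \<bullet> (\<chi> k. \<sigma> (axis k R) / R)\<bar> \<le> 4 * real CARD('d) * (3 * \<delta>)"
    "\<bar>\<alpha> x - x \<bullet> (\<chi> k. \<alpha> (axis k R) / R)\<bar> \<le> 4 * real CARD('d) * (3 * \<delta>)"
    if "norm1 x \<le> R" for x
    using mixed_defect_near_linear[OF \<open>R > 0\<close> odd bounded mixed that] by blast+
  define m\<sigma> :: "real ^ 'd" where "m\<sigma> = (\<chi> k. \<sigma> (axis k R) / R)"
  define m\<alpha> :: "real ^ 'd" where "m\<alpha> = (\<chi> k. \<alpha> (axis k R) / R)"
  show ?thesis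
  proof
    fix t :: "real ^ 'd"
    assume "norm1 t \<le> T/2"
    define h where "h = (1/2) *\<^sub>R t"
    have "norm1 h \<le> R"
      using \<open>norm1 t \<le> T/2\<close> \<open>T > 0\<close> by (simp add: h_def norm1_scaleR R_def)
    define e where "e = 12 * real CARD('d) * \<delta>"
    have "(24 * real CARD('d) + 1) * \<delta> = \<delta> + 2 * e" unfolding e_def by (simp add: algebra_simps)
    moreover have "\<bar>\<sigma> h - h \<bullet> m\<sigma>\<bar> \<le> e" "\<bar>\<alpha> h - h \<bullet> m\<alpha>\<bar> \<le> e"
      using linear[OF \<open>norm1 h \<le> R\<close>] unfolding m\<sigma>_def m\<alpha>_def e_def by simp_all
    moreover have "\<bar>I1 t - (\<sigma> h + \<alpha> h)\<bar> \<le> \<delta>" "\<bar>I2 t - (\<sigma> h - \<alpha> h)\<bar> \<le> \<delta>"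
      using doubling[OF \<open>norm1 h \<le> R\<close>] by (simp_all add: h_def \<sigma>_def \<alpha>_def)
    moreover have "t \<bullet> ((1/2) *\<^sub>R (m\<sigma> + m\<alpha>)) = h \<bullet> m\<sigma> + h \<bullet> m\<alpha>"
      "t \<bullet> ((1/2) *\<^sub>R (m\<sigma> - m\<alpha>)) = h \<bullet> m\<sigma> - h \<bullet> m\<alpha>"
      by (simp_all add: h_def inner_add_right inner_diff_right)
    ultimately have "\<bar>I1 t - t \<bullet> ((1/2) *\<^sub>R (m\<sigma> + m\<alpha>))\<bar> \<le> (24 * real CARD('d) + 1) * \<delta>
        \<and> \<bar>I2 t - t \<bullet> ((1/2) *\<^sub>R (m\<sigma> - m\<alpha>))\<bar> \<le> (24 * real CARD('d) + 1) * \<delta>"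
      by (smt (verit))
    then show "\<bar>I1 t - t \<bullet> ((1/2) *\<^sub>R (m\<sigma> + m\<alpha>))\<bar> \<le> (24 * real CARD('d) + 1) * \<delta>"
      and "\<bar>I2 t - t \<bullet> ((1/2) *\<^sub>R (m\<sigma> - m\<alpha>))\<bar> \<le> (24 * real CARD('d) + 1) * \<delta>"
      by auto
  qed
qed

lemma log_defect_gaussian_approx:
  fixes \<psi>1 \<psi>2 :: "real ^ 'd \<Rightarrow> complex"
  assumes "T > 0"
    and hermitian1: "\<And>x. norm1 x \<le> T \<Longrightarrow> \<psi>1 (- x) = cnj (\<psi>1 x)"
    and hermitian2: "\<And>x. norm1 x \<le> T \<Longrightarrow> \<psi>2 (- x) = cnj (\<psi>2 x)"
    and "\<psi>1 0 = 0" "\<psi>2 0 = 0"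
    and bounded1: "\<And>x. norm1 x \<le> T \<Longrightarrow> cmod (\<psi>1 x) \<le> B"
    and bounded2: "\<And>x. norm1 x \<le> T \<Longrightarrow> cmod (\<psi>2 x) \<le> B"
    and nonpos: "\<And>x. norm1 x \<le> T \<Longrightarrow> Re (\<psi>1 x) \<le> 0"
    and defect: "\<And>x y. norm1 x \<le> T/2 \<Longrightarrow> norm1 y \<le> T/2 \<Longrightarrow> cmod (log_defect \<psi>1 \<psi>2 x y) \<le> \<delta>"
  obtains m1 m2 :: "real ^ 'd" and Q :: "real ^ 'd ^ 'd"
  where "transpose Q = Q" and "\<And>x. 0 \<le> x \<bullet> (Q *v x)"
    and "\<And>t. norm1 t \<le> T/2 \<Longrightarrow>
           cmod (\<psi>1 t - (\<i> * of_real (t \<bullet> m1) - of_real (t \<bullet> (Q *v t) / 2)))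
             \<le> ((192 * real CARD('d) + 1) * (real CARD('d) + 1) + 24 * real CARD('d) + 1) * \<delta>"
    and "\<And>t. norm1 t \<le> T/2 \<Longrightarrow>
           cmod (\<psi>2 t - (\<i> * of_real (t \<bullet> m2) - of_real (t \<bullet> (Q *v t) / 2)))
             \<le> ((192 * real CARD('d) + 1) * (real CARD('d) + 1) + 24 * real CARD('d) + 1) * \<delta>"
proof -
  have swap: "\<psi>2 (y - x) = cnj (\<psi>2 (x - y))" if "norm1 x \<le> T/2" "norm1 y \<le> T/2" for x y
    using hermitian2[OF norm1_half_ball_combinations(4)[OF that]] by simp
  have re_defect: "\<bar>Re (\<psi>1 (2 *\<^sub>R x)) + Re (\<psi>2 (2 *\<^sub>R y)) - Re (\<psi>1 (x + y))
          - Re (\<psi>2 (x + y)) - Re (\<psi>1 (x - y)) - Re (\<psi>2 (x - y))\<bar> \<le> \<delta>"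
    if "norm1 x \<le> T/2" "norm1 y \<le> T/2" for x y
    using abs_Re_le_cmod[of "log_defect \<psi>1 \<psi>2 x y"] defect[OF that]
    by (simp add: log_defect_def swap[OF that])
  have im_defect: "\<bar>Im (\<psi>1 (2 *\<^sub>R x)) + Im (\<psi>2 (2 *\<^sub>R y)) - Im (\<psi>1 (x + y))
          - Im (\<psi>2 (x + y)) - Im (\<psi>1 (x - y)) + Im (\<psi>2 (x - y))\<bar> \<le> \<delta>"
    if "norm1 x \<le> T/2" "norm1 y \<le> T/2" for x y
    using abs_Im_le_cmod[of "log_defect \<psi>1 \<psi>2 x y"] defect[OF that]
    by (simp add: log_defect_def swap[OF that])
  have re_im_bounded: "\<bar>Re (\<psi>1 x)\<bar> \<le> B" "\<bar>Re (\<psi>2 x)\<bar> \<le> B" "\<bar>Im (\<psi>1 x)\<bar> \<le> B"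
      "\<bar>Im (\<psi>2 x)\<bar> \<le> B" if "norm1 x \<le> T" for x
    using bounded1[OF that] bounded2[OF that] abs_Re_le_cmod abs_Im_le_cmod order_trans by blast+
  have parts: "Re (\<psi>1 (- x)) = Re (\<psi>1 x)" "Re (\<psi>2 (- x)) = Re (\<psi>2 x)"
      "Im (\<psi>1 (- x)) = - Im (\<psi>1 x)" "Im (\<psi>2 (- x)) = - Im (\<psi>2 x)" if "norm1 x \<le> T" for x
    using hermitian1[OF that] hermitian2[OF that] by simp_all
  obtain Q where Q: "transpose Q = Q" "\<And>x. 0 \<le> x \<bullet> (Q *v x)"
    and re1: "\<And>t. norm1 t \<le> T/2 \<Longrightarrow> \<bar>Re (\<psi>1 t) + t \<bullet> (Q *v t) / 2\<bar>
                 \<le> (192 * real CARD('d) + 1) * (real CARD('d) + 1) * \<delta>"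
    and re2: "\<And>t. norm1 t \<le> T/2 \<Longrightarrow> \<bar>Re (\<psi>2 t) + t \<bullet> (Q *v t) / 2\<bar>
                 \<le> (192 * real CARD('d) + 1) * (real CARD('d) + 1) * \<delta>"
    using even_defect_near_quadratic_form[of T "\<lambda>x. Re (\<psi>1 x)" "\<lambda>x. Re (\<psi>2 x)" B \<delta>,
        OF \<open>T > 0\<close> parts(1,2) _ _ re_im_bounded(1,2) nonpos re_defect]
      \<open>\<psi>1 0 = 0\<close> \<open>\<psi>2 0 = 0\<close> by auto
  obtain m1 m2 where
    im1: "\<And>t. norm1 t \<le> T/2 \<Longrightarrow> \<bar>Im (\<psi>1 t) - t \<bullet> m1\<bar> \<le> (24 * real CARD('d) + 1) * \<delta>"
    and im2: "\<And>t. norm1 t \<le> T/2 \<Longrightarrow> \<bar>Im (\<psi>2 t) - t \<bullet> m2\<bar> \<le> (24 * real CARD('d) + 1) * \<delta>"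
    using odd_defect_near_linear[of T "\<lambda>x. Im (\<psi>1 x)" "\<lambda>x. Im (\<psi>2 x)" B \<delta>,
        OF \<open>T > 0\<close> parts(3,4) re_im_bounded(3,4) im_defect] by auto
  have combine: "cmod (z - (\<i> * of_real (t \<bullet> m) - of_real (t \<bullet> (Q *v t) / 2))) \<le> a + b"
    if "\<bar>Re z + t \<bullet> (Q *v t) / 2\<bar> \<le> a" "\<bar>Im z - t \<bullet> m\<bar> \<le> b" for z t m a b
    using cmod_le[of "z - (\<i> * of_real (t \<bullet> m) - of_real (t \<bullet> (Q *v t) / 2))"] that by simp
  show ?thesis
  proof (rule that[OF Q])
    fix t :: "real ^ 'd"
    assume "norm1 t \<le> T/2"
    from combine[OF re1[OF this] im1[OF this]] combine[OF re2[OF this] im2[OF this]]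
    show "cmod (\<psi>1 t - (\<i> * of_real (t \<bullet> m1) - of_real (t \<bullet> (Q *v t) / 2)))
             \<le> ((192 * real CARD('d) + 1) * (real CARD('d) + 1) + 24 * real CARD('d) + 1) * \<delta>"
      and "cmod (\<psi>2 t - (\<i> * of_real (t \<bullet> m2) - of_real (t \<bullet> (Q *v t) / 2)))
             \<le> ((192 * real CARD('d) + 1) * (real CARD('d) + 1) + 24 * real CARD('d) + 1) * \<delta>"
      by (simp_all add: algebra_simps)
  qed
qed

lemma gaussian_constant_bounds:
  fixes n \<eta> :: real
  assumes "n \<ge> 1" "\<eta> \<ge> 0" and small: "360 * n\<^sup>2 * (n + 1) * \<eta> \<le> 1"
  shows "\<eta> \<le> 1/3"
    and "((192 * n + 1) * (n + 1) + 24 * n + 1) * (3/2 * \<eta>) \<le> 360 * n\<^sup>2 * (n + 1) * \<eta>"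
proof -
  have "n \<le> n\<^sup>2" using assms by (simp add: power2_eq_square)
  have "n\<^sup>2 * 2 \<le> n\<^sup>2 * (n + 1)" using assms by (intro mult_left_mono) auto
  have "3/2 * ((192 * n + 1) * (n + 1) + 24 * n + 1) = 288 * n\<^sup>2 + 651/2 * n + 3"
    by (simp add: power2_eq_square algebra_simps)
  also have "\<dots> \<le> 360 * n\<^sup>2 * (n + 1)"
    using \<open>n \<le> n\<^sup>2\<close> \<open>n\<^sup>2 * 2 \<le> n\<^sup>2 * (n + 1)\<close> \<open>n \<ge> 1\<close> by linarith
  finally have K_le: "3/2 * ((192 * n + 1) * (n + 1) + 24 * n + 1) \<le> 360 * n\<^sup>2 * (n + 1)" .
  have "3 \<le> 360 * n\<^sup>2 * (n + 1)"
    using \<open>n \<le> n\<^sup>2\<close> \<open>n\<^sup>2 * 2 \<le> n\<^sup>2 * (n + 1)\<close> \<open>n \<ge> 1\<close> by linarith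
  from mult_right_mono[OF this \<open>\<eta> \<ge> 0\<close>] have "3 * \<eta> \<le> 360 * n\<^sup>2 * (n + 1) * \<eta>" .
  then show "\<eta> \<le> 1/3" using small by linarith
  show "((192 * n + 1) * (n + 1) + 24 * n + 1) * (3/2 * \<eta>) \<le> 360 * n\<^sup>2 * (n + 1) * \<eta>"
    using mult_right_mono[OF K_le \<open>\<eta> \<ge> 0\<close>] by (simp add: mult_ac)
qed

lemma norm_exp_sub_gauss_charf_le:
  assumes "cmod (\<psi> - (\<i> * of_real (t \<bullet> m) - of_real (t \<bullet> (Q *v t) / 2))) \<le> c" and "c \<le> 1"
  shows "cmod (exp \<psi> - gauss_charf m Q t) \<le> 2 * c * cmod (gauss_charf m Q t)"
proof -
  define \<phi> where "\<phi> = \<i> * of_real (t \<bullet> m) - of_real (t \<bullet> (Q *v t) / 2)"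
  have "cmod (exp \<psi> - exp \<phi>) \<le> 2 * cmod (\<psi> - \<phi>) * cmod (exp \<phi>)"
    using assms unfolding \<phi>_def by (intro norm_exp_diff_le) linarith
  also have "\<dots> \<le> 2 * c * cmod (exp \<phi>)"
    using assms(1) unfolding \<phi>_def by (intro mult_right_mono mult_left_mono) auto
  finally show ?thesis unfolding gauss_charf_def \<phi>_def .
qed

theorem sum_diff_factorization_stability:
  fixes f1 f2 :: "real ^ 'd \<Rightarrow> complex"
  assumes "T > 0" "p > 0"
    and cont1: "continuous_on {x. norm1 x \<le> T} f1"
    and cont2: "continuous_on {x. norm1 x \<le> T} f2"
    and "f1 0 = 1" "f2 0 = 1"
    and hermitian1: "\<And>x. norm1 x \<le> T \<Longrightarrow> f1 (- x) = cnj (f1 x)"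
    and hermitian2: "\<And>x. norm1 x \<le> T \<Longrightarrow> f2 (- x) = cnj (f2 x)"
    and le_1: "\<And>x. norm1 x \<le> T \<Longrightarrow> cmod (f1 x) \<le> 1"
    and lower1: "\<And>x. norm1 x \<le> T \<Longrightarrow> p \<le> cmod (f1 x)"
    and lower2: "\<And>x. norm1 x \<le> T \<Longrightarrow> p \<le> cmod (f2 x)"
    and approx: "\<And>s t. norm1 s \<le> T \<Longrightarrow> norm1 t \<le> T \<Longrightarrow>
                   cmod (f1 (s + t) * f2 (s - t) - f1 s * f2 s * (f1 t * f2 (- t))) \<le> \<epsilon>"
    and small: "\<epsilon> \<le> p ^ 4 / (360 * real CARD('d) ^ 2 * (real CARD('d) + 1))"
  shows "\<exists>m1 m2 :: real ^ 'd. \<exists>Q :: real ^ 'd ^ 'd.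
           transpose Q = Q \<and> (\<forall>x. x \<bullet> (Q *v x) \<ge> 0) \<and>
           (\<forall>t. norm1 t \<le> T / 2 \<longrightarrow>
              cmod (f1 t - gauss_charf m1 Q t)
                \<le> (720 * real CARD('d) ^ 2 * (real CARD('d) + 1) / p ^ 4) * \<epsilon>
                   * cmod (gauss_charf m1 Q t) \<and>
              cmod (f2 t - gauss_charf m2 Q t)
                \<le> (720 * real CARD('d) ^ 2 * (real CARD('d) + 1) / p ^ 4) * \<epsilon>
                   * cmod (gauss_charf m2 Q t))"
proof -
  define n where "n = real CARD('d)"
  define \<eta> where "\<eta> = \<epsilon> / p ^ 4"
  have "n \<ge> 1" by (simp add: n_def Suc_le_eq)
  have "\<epsilon> \<ge> 0" using approx[of 0 0] \<open>T > 0\<close> \<open>f1 0 = 1\<close> \<open>f2 0 = 1\<close> by simp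
  have "0 < 360 * n\<^sup>2 * (n + 1)" using \<open>n \<ge> 1\<close> by simp
  then have \<eta>_small: "360 * n\<^sup>2 * (n + 1) * \<eta> \<le> 1"
    using small \<open>p > 0\<close> by (simp add: \<eta>_def n_def field_simps)
  have "\<eta> \<ge> 0" using \<open>\<epsilon> \<ge> 0\<close> \<open>p > 0\<close> by (simp add: \<eta>_def)
  note \<eta>_bounds = gaussian_constant_bounds[OF \<open>n \<ge> 1\<close> this \<eta>_small]
  have nonzero: "f1 x \<noteq> 0" "f2 x \<noteq> 0" if "norm1 x \<le> T" for x
    using lower1[OF that] lower2[OF that] \<open>p > 0\<close> by auto
  obtain \<psi>1 where \<psi>1: "continuous_on {x. norm1 x \<le> T} \<psi>1" "\<And>x. norm1 x \<le> T \<Longrightarrow> exp (\<psi>1 x) = f1 x"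
      "\<psi>1 0 = 0" "\<And>x. norm1 x \<le> T \<Longrightarrow> \<psi>1 (- x) = cnj (\<psi>1 x)"
    using hermitian_continuous_log[OF _ cont1 \<open>f1 0 = 1\<close> nonzero(1) hermitian1] \<open>T > 0\<close> by auto
  obtain \<psi>2 where \<psi>2: "continuous_on {x. norm1 x \<le> T} \<psi>2" "\<And>x. norm1 x \<le> T \<Longrightarrow> exp (\<psi>2 x) = f2 x"
      "\<psi>2 0 = 0" "\<And>x. norm1 x \<le> T \<Longrightarrow> \<psi>2 (- x) = cnj (\<psi>2 x)"
    using hermitian_continuous_log[OF _ cont2 \<open>f2 0 = 1\<close> nonzero(2) hermitian2] \<open>T > 0\<close> by auto
  obtain B1 B2 where "\<And>x. norm1 x \<le> T \<Longrightarrow> cmod (\<psi>1 x) \<le> B1" "\<And>x. norm1 x \<le> T \<Longrightarrow> cmod (\<psi>2 x) \<le> B2"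
    using continuous_on_norm1_ball_bounded[OF \<psi>1(1)] continuous_on_norm1_ball_bounded[OF \<psi>2(1)]
    by metis
  then have bounded: "cmod (\<psi>1 x) \<le> max B1 B2" "cmod (\<psi>2 x) \<le> max B1 B2" if "norm1 x \<le> T" for x
    using that by fastforce+
  have "Re (\<psi>1 x) \<le> 0" if "norm1 x \<le> T" for x
    using le_1[OF that] \<psi>1(2)[OF that] by (metis exp_le_one_iff norm_exp_eq_Re)
  moreover have "cmod (log_defect \<psi>1 \<psi>2 x y) \<le> 3/2 * \<eta>" if "norm1 x \<le> T/2" "norm1 y \<le> T/2" for x y
    using log_defect_bound[OF \<open>p > 0\<close> \<psi>1(1) \<psi>2(1) \<psi>1(2) \<psi>2(2) \<psi>1(3) \<psi>2(3) lower1 lower2 approx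
        _ that] \<eta>_bounds(1) unfolding \<eta>_def by simp
  ultimately obtain m1 m2 Q where "transpose Q = Q" "\<And>x. 0 \<le> x \<bullet> (Q *v x)"
    and close: "\<And>t. norm1 t \<le> T/2 \<Longrightarrow>
           cmod (\<psi>1 t - (\<i> * of_real (t \<bullet> m1) - of_real (t \<bullet> (Q *v t) / 2)))
             \<le> ((192 * n + 1) * (n + 1) + 24 * n + 1) * (3/2 * \<eta>)"
      "\<And>t. norm1 t \<le> T/2 \<Longrightarrow>
           cmod (\<psi>2 t - (\<i> * of_real (t \<bullet> m2) - of_real (t \<bullet> (Q *v t) / 2)))
             \<le> ((192 * n + 1) * (n + 1) + 24 * n + 1) * (3/2 * \<eta>)"
    using log_defect_gaussian_approx[OF \<open>T > 0\<close> \<psi>1(4) \<psi>2(4) \<psi>1(3) \<psi>2(3) bounded]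
    unfolding n_def by metis
  have "2 * (360 * n\<^sup>2 * (n + 1) * \<eta>) = 720 * n\<^sup>2 * (n + 1) / p ^ 4 * \<epsilon>"
    by (simp add: \<eta>_def)
  then have "cmod (f1 t - gauss_charf m1 Q t) \<le> 720 * n\<^sup>2 * (n + 1) / p ^ 4 * \<epsilon> * cmod (gauss_charf m1 Q t)
      \<and> cmod (f2 t - gauss_charf m2 Q t) \<le> 720 * n\<^sup>2 * (n + 1) / p ^ 4 * \<epsilon> * cmod (gauss_charf m2 Q t)"
    if "norm1 t \<le> T / 2" for t
    using norm_exp_sub_gauss_charf_le[OF order_trans[OF close(1)[OF that] \<eta>_bounds(2)] \<eta>_small]
      norm_exp_sub_gauss_charf_le[OF order_trans[OF close(2)[OF that] \<eta>_bounds(2)] \<eta>_small]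
      \<psi>1(2)[of t] \<psi>2(2)[of t] that \<open>T > 0\<close> by simp
  then show ?thesis
    using \<open>transpose Q = Q\<close> \<open>\<And>x. 0 \<le> x \<bullet> (Q *v x)\<close> unfolding n_def by blast
qed

theorem theorem2:
  fixes M :: "'a measure" and X1 X2 :: "'a \<Rightarrow> real ^ 'd"
    and \<epsilon> T p :: real
  assumes "prob_space M"
    and "X1 \<in> borel_measurable M" and "X2 \<in> borel_measurable M"
    and "prob_space.indep_var M borel X1 borel X2"
    and "T > 0"
    and "eps_T_dependent M (\<lambda>w. X1 w + X2 w) (\<lambda>w. X1 w - X2 w) \<epsilon> T"
    and "p > 0"
    and "\<And>t. norm1 t \<le> T \<Longrightarrow> cmod (charf M X1 t) \<ge> p"
    and "\<And>t. norm1 t \<le> T \<Longrightarrow> cmod (charf M X2 t) \<ge> p"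
    and "\<epsilon> > 0"
    and "\<epsilon> \<le> p ^ 4 / (360 * real CARD('d) ^ 2 * (real CARD('d) + 1))"
  shows "\<exists>m1 m2 :: real ^ 'd. \<exists>Q :: real ^ 'd ^ 'd.
           transpose Q = Q \<and> (\<forall>x. x \<bullet> (Q *v x) \<ge> 0) \<and>
           (\<forall>t. norm1 t \<le> T / 2 \<longrightarrow>
              cmod (charf M X1 t - gauss_charf m1 Q t)
                \<le> (720 * real CARD('d) ^ 2 * (real CARD('d) + 1) / p ^ 4) * \<epsilon>
                   * cmod (gauss_charf m1 Q t) \<and>
              cmod (charf M X2 t - gauss_charf m2 Q t)
                \<le> (720 * real CARD('d) ^ 2 * (real CARD('d) + 1) / p ^ 4) * \<epsilon>
                   * cmod (gauss_charf m2 Q t))"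
proof -
  interpret prob_space M by fact
  show ?thesis
  proof (rule sum_diff_factorization_stability[OF \<open>T > 0\<close> \<open>p > 0\<close>])
    show "continuous_on {x. norm1 x \<le> T} (charf M X1)" "continuous_on {x. norm1 x \<le> T} (charf M X2)"
      using continuous_charf assms(2,3) continuous_on_subset by blast+
    show "cmod (charf M X1 (s + t) * charf M X2 (s - t)
            - charf M X1 s * charf M X2 s * (charf M X1 t * charf M X2 (- t))) \<le> \<epsilon>"
      if "norm1 s \<le> T" "norm1 t \<le> T" for s t
      using eps_T_dependent_sum_diff[OF assms(4,6) that] .
  qed (use assms(8,9,11) in \<open>simp_all add: charf_0 charf_uminus norm_charf_le_1\<close>)
qed

end
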